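(* Let $A\in M_n(\mathbb{C})$ and $1\le m\le k\le n$. Then $$\|D^m\vee^kA\|=\frac{k!}{(k-m)!}\|A\|^{k-m}.$$
   Context: $\vee^kA$ denotes the $k$-th symmetric tensor power of $A$, i.e. the restriction of $A\otimes\cdots\otimes A$ ($k$ factors) to the symmetric subspace $\vee^k\mathbb{C}^n\subseteq\otimes^k\mathbb{C}^n$. $D^m\vee^k(A)(X^1,\ldots,X^m)=\frac{\partial^m}{\partial t_1\cdots\partial t_m}\big|_{t=0}\vee^k(A+t_1X^1+\cdots+t_mX^m)$. $\|\cdot\|$ is the operator (spectral) norm, and $\|D^m\vee^kA\|=\sup_{\|X^1\|=\cdots=\|X^m\|=1}\|D^m\vee^k(A)(X^1,\ldots,X^m)\|$. *)

theory Defs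
  imports "HOL-Analysis.Analysis"
begin

text \<open>Matrices in M_n(C) are represented as complex^'n^'n for a finite index type 'n
  (n = CARD('n)).  The operator (spectral) norm is the operator norm of x |-> A x on
  C^n with its Euclidean norm.\<close>

definition mat_opnorm :: "complex^'n^'n \<Rightarrow> real" where
  "mat_opnorm A = onorm (\<lambda>x. A *v x)"

text \<open>The k-fold tensor power of C^n: coordinates indexed by lists of length k
  over 'n.  Tensors are functions on 'n list, required to vanish off length-k lists.\<close>

definition tidx :: "nat \<Rightarrow> 'n::finite list set" where
  "tidx k = {is. length is = k}"

definition tnorm :: "nat \<Rightarrow> ('n::finite list \<Rightarrow> complex) \<Rightarrow> real" where
  "tnorm k v = sqrt (\<Sum>is\<in>tidx k. (cmod (v is))\<^sup>2)"

definition symtensor :: "nat \<Rightarrow> ('n::finite list \<Rightarrow> complex) \<Rightarrow> bool" where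
  "symtensor k v \<longleftrightarrow> (\<forall>is. length is \<noteq> k \<longrightarrow> v is = 0) \<and>
     (\<forall>is \<sigma>. length is = k \<longrightarrow> \<sigma> permutes {..<k} \<longrightarrow>
        v (map (\<lambda>l. is ! \<sigma> l) [0..<k]) = v is)"

definition tapply :: "nat \<Rightarrow> ('n::finite list \<Rightarrow> 'n list \<Rightarrow> complex) \<Rightarrow>
    ('n list \<Rightarrow> complex) \<Rightarrow> ('n list \<Rightarrow> complex)" where
  "tapply k T v = (\<lambda>is. if length is = k then (\<Sum>js\<in>tidx k. T is js * v js) else 0)"

text \<open>Operator norm of the restriction of T to the symmetric subspace
  (used for operators leaving the symmetric subspace invariant).\<close>

definition sym_opnorm :: "nat \<Rightarrow> ('n::finite list \<Rightarrow> 'n list \<Rightarrow> complex) \<Rightarrow> real" where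
  "sym_opnorm k T = Sup {tnorm k (tapply k T v) | v. symtensor k v \<and> tnorm k v = 1}"

definition tpow :: "nat \<Rightarrow> complex^'n^'n \<Rightarrow> 'n::finite list \<Rightarrow> 'n list \<Rightarrow> complex" where
  "tpow k M is js = (\<Prod>l<k. M $ (is ! l) $ (js ! l))"

definition partial :: "nat \<Rightarrow> ((nat \<Rightarrow> real) \<Rightarrow> complex) \<Rightarrow> (nat \<Rightarrow> real) \<Rightarrow> complex" where
  "partial j f t = vector_derivative (\<lambda>s. f (t(j := s))) (at (t j))"

fun mixed_partial :: "nat \<Rightarrow> ((nat \<Rightarrow> real) \<Rightarrow> complex) \<Rightarrow> (nat \<Rightarrow> real) \<Rightarrow> complex" where
  "mixed_partial 0 f = f"
| "mixed_partial (Suc m) f = partial (Suc m) (mixed_partial m f)"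

text \<open>D^m (tensor^k)(A)(X^1,...,X^m): entrywise the mixed partial derivative at t = 0 of
  the tensor power of A + t_1 X^1 + ... + t_m X^m.  Its restriction to the symmetric
  subspace is D^m (sym^k)(A)(X^1,...,X^m).\<close>

definition DTpow :: "nat \<Rightarrow> nat \<Rightarrow> complex^'n^'n \<Rightarrow> (nat \<Rightarrow> complex^'n^'n) \<Rightarrow>
    'n::finite list \<Rightarrow> 'n list \<Rightarrow> complex" where
  "DTpow m k A X is js =
     mixed_partial m (\<lambda>t. tpow k (A + (\<Sum>i\<in>{1..m}. t i *\<^sub>R X i)) is js) (\<lambda>_. 0)"

definition norm_D_sympow :: "nat \<Rightarrow> nat \<Rightarrow> complex^'n::finite^'n \<Rightarrow> real" where
  "norm_D_sympow m k A =
     Sup {sym_opnorm k (DTpow m k A X) | X. \<forall>i\<in>{1..m}. mat_opnorm (X i) = 1}"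

end

theory Submission
  imports Defs
begin

(*
  Each entry of the tensor power of A + t_1 X_1 + ... + t_m X_m is a
     polynomial in t_1..t_m; choosing for every tensor position l < k one summand
     (A, or t_i X_i) gives a Kronecker product of matrices times a monomial.  The mixed
     derivative d^m/dt_1...dt_m at t = 0 keeps exactly the monomial t_1 * ... * t_m, so
     D^m(A)(X) is the sum of the Kronecker products over the "linear choices" in which
     every X_i is used exactly once and A fills the remaining k - m positions.
  2. Upper bound.  A Kronecker product M_0 (x) ... (x) M_{k-1} has operator norm at most
     the product of the norms; with ||X_i|| = 1 each term is bounded by ||A||^(k-m),
     and the triangle inequality bounds D^m(A)(X) by (#linear choices) * ||A||^(k-m).
  3. Lower bound.  Write A = ||A|| Y with ||Y|| = 1 and take all X_i = Y.  Then
     D^m(A)(X) is (#linear choices) * ||A||^(k-m) times Y (x) ... (x) Y, which attains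
     this value on the symmetric product tensor x (x) ... (x) x of a maximising vector x.
  4. Counting.  Linear choices correspond to injections {1..m} -> {..<k}, of which
     there are k!/(k-m)!.
*)

definition poly_sum :: "nat set \<Rightarrow> 'g set \<Rightarrow> ('g \<Rightarrow> complex) \<Rightarrow> ('g \<Rightarrow> nat \<Rightarrow> nat) \<Rightarrow>
    (nat \<Rightarrow> real) \<Rightarrow> complex" where
  "poly_sum I G c e t = (\<Sum>g\<in>G. c g * (\<Prod>i\<in>I. (complex_of_real (t i)) ^ (e g i)))"

lemma has_vector_derivative_monomial:
  "((\<lambda>s::real. c * (complex_of_real s) ^ n) has_vector_derivative
     (c * of_nat n * (complex_of_real x) ^ (n - 1))) (at x)"
  unfolding has_vector_derivative_def
  by (rule derivative_eq_intros refl)+ (auto simp: fun_eq_iff scaleR_conv_of_real)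

lemma poly_sum_split_var:
  assumes "finite I" "j \<in> I"
  shows "poly_sum I G c e t =
    (\<Sum>g\<in>G. c g * (\<Prod>i\<in>I-{j}. (complex_of_real (t i)) ^ (e g i)) * (complex_of_real (t j)) ^ (e g j))"
  unfolding poly_sum_def by (simp add: prod.remove[OF assms] mult_ac)

lemma partial_poly_sum:
  assumes "finite I" "j \<in> I"
  shows "partial j (poly_sum I G c e) =
    poly_sum I G (\<lambda>g. c g * of_nat (e g j)) (\<lambda>g. (e g)(j := e g j - 1))"
proof
  fix t
  define K where "K g = c g * (\<Prod>i\<in>I-{j}. (complex_of_real (t i)) ^ (e g i))" for g
  have frozen: "(\<Prod>i\<in>I-{j}. complex_of_real (t' i) ^ e' i) = (\<Prod>i\<in>I-{j}. complex_of_real (t i) ^ e g i)"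
    if "\<And>i. i \<noteq> j \<Longrightarrow> t' i = t i" "\<And>i. i \<noteq> j \<Longrightarrow> e' i = e g i" for t' e' g
    using that by (intro prod.cong) auto
  have "((\<lambda>s. poly_sum I G c e (t(j := s))) has_vector_derivative
      (\<Sum>g\<in>G. K g * of_nat (e g j) * (complex_of_real (t j)) ^ (e g j - 1))) (at (t j))"
    unfolding poly_sum_split_var[OF assms] K_def frozen[of "t(j := _)" "e _"]
    by (intro has_vector_derivative_sum) (simp add: has_vector_derivative_monomial[unfolded One_nat_def])
  then have "partial j (poly_sum I G c e) t =
      (\<Sum>g\<in>G. K g * of_nat (e g j) * (complex_of_real (t j)) ^ (e g j - 1))"
    unfolding partial_def by (rule vector_derivative_at)
  also have "\<dots> = poly_sum I G (\<lambda>g. c g * of_nat (e g j)) (\<lambda>g. (e g)(j := e g j - 1)) t"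
    unfolding poly_sum_split_var[OF assms] K_def frozen[of t "(e _)(j := _)"]
    by (simp add: mult_ac)
  finally show "partial j (poly_sum I G c e) t =
      poly_sum I G (\<lambda>g. c g * of_nat (e g j)) (\<lambda>g. (e g)(j := e g j - 1)) t" .
qed

lemma mixed_partial_poly_sum:
  assumes "p \<le> m"
  shows "mixed_partial p (poly_sum {1..m} G c e) =
    poly_sum {1..m} G (\<lambda>g. c g * (\<Prod>i\<in>{1..p}. of_nat (e g i)))
      (\<lambda>g i. if i \<in> {1..p} then e g i - 1 else e g i)"
  using assms
proof (induction p)
  case 0
  then show ?case by simp
next
  case (Suc p)
  then have "mixed_partial (Suc p) (poly_sum {1..m} G c e) =
      poly_sum {1..m} G (\<lambda>g. c g * (\<Prod>i\<in>{1..p}. of_nat (e g i)) * of_nat (e g (Suc p)))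
       (\<lambda>g. (\<lambda>i. if i \<in> {1..p} then e g i - 1 else e g i)(Suc p := e g (Suc p) - 1))"
    by (simp add: partial_poly_sum)
  also have "\<dots> = poly_sum {1..m} G (\<lambda>g. c g * (\<Prod>i\<in>{1..Suc p}. of_nat (e g i)))
      (\<lambda>g i. if i \<in> {1..Suc p} then e g i - 1 else e g i)"
    by (rule arg_cong2[where f="poly_sum {1..m} G"]) (auto simp: fun_eq_iff prod.cl_ivl_Suc mult.assoc)
  finally show ?case .
qed

lemma mixed_partial_poly_sum_origin:
  assumes "finite G"
  shows "mixed_partial m (poly_sum {1..m} G c e) (\<lambda>_. 0) =
    (\<Sum>g\<in>{g\<in>G. \<forall>i\<in>{1..m}. e g i = 1}. c g)"
proof -
  have indicator: "of_nat n * (0::complex) ^ (n - 1) = (if n = 1 then 1 else 0)" for n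
    by (cases n) (auto simp: power_0_left)
  have selector: "(\<Prod>i\<in>{1..m}. of_nat (e g i) * (0::complex) ^ (e g i - 1)) =
      (if \<forall>i\<in>{1..m}. e g i = 1 then 1 else 0)" for g
    unfolding indicator by (auto intro: prod.neutral)
  have "mixed_partial m (poly_sum {1..m} G c e) (\<lambda>_. 0) =
      (\<Sum>g\<in>G. c g * (\<Prod>i\<in>{1..m}. of_nat (e g i) * (0::complex) ^ (e g i - 1)))"
    by (subst mixed_partial_poly_sum) (simp_all add: poly_sum_def prod.distrib mult.assoc)
  also have "\<dots> = (\<Sum>g\<in>G. if \<forall>i\<in>{1..m}. e g i = 1 then c g else 0)"
    unfolding selector by (intro sum.cong) auto
  also have "\<dots> = (\<Sum>g\<in>{g\<in>G. \<forall>i\<in>{1..m}. e g i = 1}. c g)"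
    using assms by (simp add: sum.inter_filter)
  finally show ?thesis .
qed

definition kron :: "nat \<Rightarrow> (nat \<Rightarrow> complex^'n^'n) \<Rightarrow> 'n::finite list \<Rightarrow> 'n list \<Rightarrow> complex" where
  "kron k M is js = (\<Prod>l<k. M l $ (is ! l) $ (js ! l))"

text \<open>Expanding the tensor power of A + t_1 X_1 + ... + t_m X_m amounts to choosing, for
  each tensor position l < k, a summand: A (choice 0) or t_i X_i (choice i).\<close>

definition choices :: "nat \<Rightarrow> nat \<Rightarrow> (nat \<Rightarrow> nat) set" where
  "choices m k = {..<k} \<rightarrow>\<^sub>E {0..m}"

definition chosen_factors :: "complex^'n^'n \<Rightarrow> (nat \<Rightarrow> complex^'n^'n) \<Rightarrow> (nat \<Rightarrow> nat) \<Rightarrow>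
    nat \<Rightarrow> complex^'n^'n" where
  "chosen_factors A X g l = (if g l = 0 then A else X (g l))"

definition linear_choices :: "nat \<Rightarrow> nat \<Rightarrow> (nat \<Rightarrow> nat) set" where
  "linear_choices m k = {g \<in> choices m k. \<forall>i\<in>{1..m}. card {l\<in>{..<k}. g l = i} = 1}"

lemma finite_choices: "finite (choices m k)"
  unfolding choices_def by (auto intro: finite_PiE)

lemma finite_linear_choices: "finite (linear_choices m k)"
  unfolding linear_choices_def using finite_choices by simp

lemma prod_choice_monomial:
  assumes "g \<in> choices m k"
  shows "(\<Prod>l<k. (if g l = 0 then 1 else f (g l))) =
    (\<Prod>i\<in>{1..m}. (f i :: complex) ^ card {l\<in>{..<k}. g l = i})"
proof -
  have img: "g ` {..<k} \<subseteq> {0..m}" using assms unfolding choices_def by auto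
  have "(\<Prod>l<k. (if g l = 0 then 1 else f (g l))) =
      (\<Prod>r\<in>{0..m}. \<Prod>l\<in>{l\<in>{..<k}. g l = r}. (if r = 0 then 1 else f r))"
    by (subst prod.group[symmetric, OF _ _ img]) (auto intro!: prod.cong)
  also have "\<dots> = (\<Prod>r\<in>insert 0 {1..m}. (if r = 0 then 1 else f r ^ card {l\<in>{..<k}. g l = r}))"
    by (intro prod.cong) auto
  also have "\<dots> = (\<Prod>i\<in>{1..m}. f i ^ card {l\<in>{..<k}. g l = i})"
    by simp
  finally show ?thesis .
qed

lemma tpow_expansion:
  "tpow k (A + (\<Sum>i\<in>{1..m}. t i *\<^sub>R X i)) is js =
     poly_sum {1..m} (choices m k) (\<lambda>g. kron k (chosen_factors A X g) is js)
       (\<lambda>g i. card {l\<in>{..<k}. g l = i}) t"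
proof -
  define y where "y l r = (if r = 0 then A $ (is!l) $ (js!l)
      else complex_of_real (t r) * X r $ (is!l) $ (js!l))" for l r
  have "{0..m} = insert 0 {1..m}" by auto
  then have entry: "(A + (\<Sum>i\<in>{1..m}. t i *\<^sub>R X i)) $ (is!l) $ (js!l) = (\<Sum>r\<in>{0..m}. y l r)" for l
    by (simp add: y_def) (simp add: scaleR_conv_of_real)
  have "tpow k (A + (\<Sum>i\<in>{1..m}. t i *\<^sub>R X i)) is js = (\<Prod>l<k. \<Sum>r\<in>{0..m}. y l r)"
    unfolding tpow_def entry ..
  also have "\<dots> = (\<Sum>g\<in>choices m k. \<Prod>l<k. y l (g l))"
    unfolding choices_def by (rule prod_sum_PiE) auto
  also have "\<dots> = poly_sum {1..m} (choices m k) (\<lambda>g. kron k (chosen_factors A X g) is js)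
       (\<lambda>g i. card {l\<in>{..<k}. g l = i}) t"
    unfolding poly_sum_def
  proof (rule sum.cong[OF refl])
    fix g assume g: "g \<in> choices m k"
    have "(\<Prod>l<k. y l (g l)) = (\<Prod>l<k. chosen_factors A X g l $ (is!l) $ (js!l) *
        (if g l = 0 then 1 else complex_of_real (t (g l))))"
      by (rule prod.cong) (auto simp: y_def chosen_factors_def)
    also have "\<dots> = kron k (chosen_factors A X g) is js *
        (\<Prod>i\<in>{1..m}. complex_of_real (t i) ^ card {l\<in>{..<k}. g l = i})"
      using prod_choice_monomial[OF g, of "\<lambda>i. complex_of_real (t i)"]
      by (simp add: prod.distrib kron_def)
    finally show "(\<Prod>l<k. y l (g l)) = kron k (chosen_factors A X g) is js *
        (\<Prod>i\<in>{1..m}. complex_of_real (t i) ^ card {l\<in>{..<k}. g l = i})" .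
  qed
  finally show ?thesis .
qed

lemma DTpow_linear_choices:
  "DTpow m k A X is js = (\<Sum>g\<in>linear_choices m k. kron k (chosen_factors A X g) is js)"
  unfolding DTpow_def tpow_expansion mixed_partial_poly_sum_origin[OF finite_choices]
  by (simp add: linear_choices_def)

lemma tidx_0: "tidx 0 = {[]}"
  unfolding tidx_def by auto

lemma sum_tidx_Suc:
  "(\<Sum>is\<in>tidx (Suc k). f is) = (\<Sum>a\<in>(UNIV::'n::finite set). \<Sum>is\<in>tidx k. f (a # is))"
proof -
  have tidx_Suc: "tidx (Suc k) = (\<lambda>(a,is). a # is) ` (UNIV \<times> tidx k)"
    unfolding tidx_def by (auto simp: image_iff length_Suc_conv)
  have inj: "inj_on (\<lambda>(a,is). a # is) (UNIV \<times> (tidx k :: 'n list set))"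
    by (auto simp: inj_on_def)
  have "(\<Sum>is\<in>tidx (Suc k). f is) = (\<Sum>p\<in>UNIV \<times> (tidx k :: 'n list set). f ((\<lambda>(a,is). a # is) p))"
    unfolding tidx_Suc by (rule sum.reindex[OF inj, unfolded comp_def])
  also have "\<dots> = (\<Sum>a\<in>(UNIV::'n set). \<Sum>is\<in>tidx k. f (a # is))"
    by (simp only: sum.cartesian_product) (simp add: split_def)
  finally show ?thesis .
qed

lemma sum_prod_tidx:
  "(\<Sum>js\<in>tidx k. \<Prod>l<k. F l (js ! l)) =
     (\<Prod>l<k. \<Sum>j\<in>(UNIV::'n::finite set). (F l j :: 'a::comm_semiring_1))"
proof (induction k arbitrary: F)
  case 0
  then show ?case by (simp add: tidx_0)
next
  case (Suc k)
  have "(\<Sum>js\<in>tidx (Suc k). \<Prod>l<Suc k. F l (js ! l)) =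
      (\<Sum>a\<in>(UNIV::'n set). F 0 a * (\<Sum>js\<in>tidx k. \<Prod>l<k. F (Suc l) (js ! l)))"
    unfolding sum_tidx_Suc by (simp add: prod.lessThan_Suc_shift sum_distrib_left del: prod.lessThan_Suc)
  also have "\<dots> = (\<Prod>l<Suc k. \<Sum>j\<in>(UNIV::'n set). F l j)"
    by (simp add: Suc.IH[of "\<lambda>l. F (Suc l)"] sum_distrib_right prod.lessThan_Suc_shift
        del: prod.lessThan_Suc)
  finally show ?case .
qed

definition tnorm_sq :: "nat \<Rightarrow> ('n::finite list \<Rightarrow> complex) \<Rightarrow> real" where
  "tnorm_sq k v = (\<Sum>is\<in>tidx k. (cmod (v is))\<^sup>2)"

lemma tnorm_sqrt: "tnorm k v = sqrt (tnorm_sq k v)"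
  unfolding tnorm_def tnorm_sq_def ..

lemma norm_sq_vec: "(norm (x::complex^'n))\<^sup>2 = (\<Sum>a\<in>UNIV. (cmod (x $ a))\<^sup>2)"
  unfolding norm_vec_def L2_set_def by (simp add: sum_nonneg)

lemma kron_Cons:
  "kron (Suc k) M (a # is) (b # js) = M 0 $ a $ b * kron k (\<lambda>l. M (Suc l)) is js"
  unfolding kron_def by (simp add: prod.lessThan_Suc_shift del: prod.lessThan_Suc)

lemma tapply_kron_Cons:
  assumes "length is = k"
  shows "tapply (Suc k) (kron (Suc k) M) v (a # is) =
    (M 0 *v (\<chi> b. tapply k (kron k (\<lambda>l. M (Suc l))) (\<lambda>js. v (b # js)) is)) $ a"
  using assms
  by (simp add: tapply_def sum_tidx_Suc kron_Cons matrix_vector_mult_def sum_distrib_left mult.assoc)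

lemma kron_norm_bound:
  assumes "\<And>l x. l < k \<Longrightarrow> norm (M l *v x) \<le> c l * norm x" "\<And>l. l < k \<Longrightarrow> 0 \<le> c l"
  shows "tnorm_sq k (tapply k (kron k M) v) \<le> (\<Prod>l<k. c l)\<^sup>2 * tnorm_sq k (v :: 'n::finite list \<Rightarrow> complex)"
  using assms
proof (induction k arbitrary: M c v)
  case 0
  then show ?case by (simp add: tnorm_sq_def tapply_def kron_def tidx_0)
next
  case (Suc k)
  define slice where "slice b = (\<lambda>js. v (b # js))" for b
  define w where "w b = tapply k (kron k (\<lambda>l. M (Suc l))) (slice b)" for b
  define C where "C = (\<Prod>l<k. c (Suc l))"
  have IH: "tnorm_sq k (w b) \<le> C\<^sup>2 * tnorm_sq k (slice b)" for b
    unfolding w_def C_def by (rule Suc.IH) (use Suc.prems in auto)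
  have head: "(norm (M 0 *v x))\<^sup>2 \<le> (c 0)\<^sup>2 * (norm x)\<^sup>2" for x
    using Suc.prems(1)[of 0 x] Suc.prems(2)[of 0] by (simp add: power_mult_distrib[symmetric] power_mono)
  have "tnorm_sq (Suc k) (tapply (Suc k) (kron (Suc k) M) v) =
      (\<Sum>is\<in>tidx k. (norm (M 0 *v (\<chi> b. w b is)))\<^sup>2)"
    unfolding tnorm_sq_def sum_tidx_Suc
    by (subst sum.swap) (simp add: tapply_kron_Cons tidx_def norm_sq_vec w_def slice_def)
  also have "\<dots> \<le> (\<Sum>is\<in>tidx k. (c 0)\<^sup>2 * (norm (\<chi> b. w b is))\<^sup>2)"
    by (intro sum_mono head)
  also have "\<dots> = (c 0)\<^sup>2 * (\<Sum>b\<in>UNIV. tnorm_sq k (w b))"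
    by (simp add: sum_distrib_left[symmetric] norm_sq_vec tnorm_sq_def) (rule disjI2, rule sum.swap)
  also have "\<dots> \<le> (c 0)\<^sup>2 * (\<Sum>b\<in>UNIV. C\<^sup>2 * tnorm_sq k (slice b))"
    by (intro mult_left_mono sum_mono IH) auto
  also have "\<dots> = (\<Prod>l<Suc k. c l)\<^sup>2 * tnorm_sq (Suc k) v"
    by (simp add: tnorm_sq_def sum_tidx_Suc slice_def C_def prod.lessThan_Suc_shift
        sum_distrib_left[symmetric] power_mult_distrib mult.assoc del: prod.lessThan_Suc)
  finally show ?case .
qed

text \<open>The tensor norm is the L2 norm of the coordinates, hence satisfies the triangle
  inequality and is homogeneous.\<close>

lemma tnorm_add: "tnorm k (\<lambda>is. f is + h is) \<le> tnorm k f + tnorm k h"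
proof -
  have L2: "tnorm k v = L2_set (\<lambda>is. cmod (v is)) (tidx k)" for v
    unfolding tnorm_def L2_set_def ..
  have "tnorm k (\<lambda>is. f is + h is) \<le> L2_set (\<lambda>is. cmod (f is) + cmod (h is)) (tidx k)"
    unfolding L2 by (rule L2_set_mono) (auto intro: norm_triangle_ineq)
  also have "\<dots> \<le> tnorm k f + tnorm k h"
    unfolding L2 by (rule L2_set_triangle_ineq)
  finally show ?thesis .
qed

lemma tnorm_sum: "finite S \<Longrightarrow> tnorm k (\<lambda>is. \<Sum>g\<in>S. f g is) \<le> (\<Sum>g\<in>S. tnorm k (f g))"
proof (induction S rule: finite_induct)
  case empty
  then show ?case by (simp add: tnorm_def)
next
  case (insert x F)
  then have "tnorm k (\<lambda>is. \<Sum>g\<in>insert x F. f g is) \<le> tnorm k (f x) + tnorm k (\<lambda>is. \<Sum>g\<in>F. f g is)"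
    using tnorm_add[of k "f x"] by simp
  then show ?case using insert by simp
qed

lemma tnorm_scale: "tnorm k (\<lambda>is. C * f is) = cmod C * tnorm k f"
  unfolding tnorm_def
  by (simp add: norm_mult power_mult_distrib sum_distrib_left[symmetric] real_sqrt_mult)

lemma tapply_sum: "tapply k (\<lambda>is js. \<Sum>g\<in>S. T g is js) v = (\<lambda>is. \<Sum>g\<in>S. tapply k (T g) v is)"
  by (auto simp: tapply_def fun_eq_iff sum_distrib_right intro: sum.swap)

lemma tapply_scale: "tapply k (\<lambda>is js. C * T is js) v = (\<lambda>is. C * tapply k T v is)"
  by (auto simp: tapply_def fun_eq_iff sum_distrib_left mult.assoc)

lemma mat_opnorm_bound: "norm (A *v x) \<le> mat_opnorm A * norm x"
  unfolding mat_opnorm_def by (rule onorm[OF matrix_vector_mul_bounded_linear])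

lemma mat_opnorm_nonneg: "0 \<le> mat_opnorm A"
  unfolding mat_opnorm_def by (rule onorm_pos_le[OF matrix_vector_mul_bounded_linear])

lemma card_positions_of_A:
  assumes g: "g \<in> linear_choices m k"
  shows "card {l\<in>{..<k}. g l = 0} = k - m"
proof -
  have img: "g ` {..<k} \<subseteq> {0..m}" using g unfolding linear_choices_def choices_def by auto
  have "k = (\<Sum>r\<in>{0..m}. card {l\<in>{..<k}. g l = r})"
    using sum.group[OF _ _ img, of "\<lambda>_. 1::nat"] by simp
  also have "\<dots> = card {l\<in>{..<k}. g l = 0} + (\<Sum>r\<in>{1..m}. card {l\<in>{..<k}. g l = r})"
    by (simp add: atLeastAtMost_insertL[symmetric])
  also have "(\<Sum>r\<in>{1..m}. card {l\<in>{..<k}. g l = r}) = m"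
    using g unfolding linear_choices_def by simp
  finally show ?thesis by simp
qed

lemma prod_positions_of_A:
  assumes "g \<in> linear_choices m k"
  shows "(\<Prod>l<k. if g l = 0 then z else 1) = (z::'a::comm_monoid_mult) ^ (k - m)"
proof -
  have "(\<Prod>l<k. if g l = 0 then z else 1) = (\<Prod>l\<in>{l\<in>{..<k}. g l = 0}. z)"
    by (rule prod.inter_filter[symmetric]) simp
  then show ?thesis using card_positions_of_A[OF assms] by simp
qed

lemma kron_chosen_factors_bound:
  assumes g: "g \<in> linear_choices m k" and X: "\<forall>i\<in>{1..m}. mat_opnorm (X i) = 1"
  shows "tnorm k (tapply k (kron k (chosen_factors A X g)) v) \<le> mat_opnorm A ^ (k - m) * tnorm k v"
proof -
  define c where "c l = (if g l = 0 then mat_opnorm A else 1)" for l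
  have range: "l < k \<Longrightarrow> g l \<in> {0..m}" for l
    using g unfolding linear_choices_def choices_def by auto
  have "tnorm_sq k (tapply k (kron k (chosen_factors A X g)) v) \<le> (\<Prod>l<k. c l)\<^sup>2 * tnorm_sq k v"
  proof (rule kron_norm_bound)
    fix l x assume "l < k"
    then show "norm (chosen_factors A X g l *v x) \<le> c l * norm x"
    proof (cases "g l = 0")
      case False
      with range[of l] \<open>l < k\<close> have "mat_opnorm (X (g l)) = 1" using X by auto
      with False show ?thesis using mat_opnorm_bound[of "X (g l)" x] by (simp add: chosen_factors_def c_def)
    qed (simp add: chosen_factors_def c_def mat_opnorm_bound)
  qed (simp add: c_def mat_opnorm_nonneg)
  also have "(\<Prod>l<k. c l) = mat_opnorm A ^ (k - m)"
    unfolding c_def by (rule prod_positions_of_A[OF g])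
  finally have "sqrt (tnorm_sq k (tapply k (kron k (chosen_factors A X g)) v)) \<le>
      sqrt ((mat_opnorm A ^ (k - m))\<^sup>2 * tnorm_sq k v)"
    by (rule real_sqrt_le_mono)
  then show ?thesis
    by (simp add: tnorm_sqrt real_sqrt_mult mat_opnorm_nonneg)
qed

lemma DTpow_bound:
  assumes X: "\<forall>i\<in>{1..m}. mat_opnorm (X i) = 1"
  shows "tnorm k (tapply k (DTpow m k A X) v) \<le>
    real (card (linear_choices m k)) * mat_opnorm A ^ (k - m) * tnorm k v"
proof -
  have "tnorm k (tapply k (DTpow m k A X) v) =
      tnorm k (\<lambda>is. \<Sum>g\<in>linear_choices m k. tapply k (kron k (chosen_factors A X g)) v is)"
    by (simp add: DTpow_linear_choices[abs_def] tapply_sum)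
  also have "\<dots> \<le> (\<Sum>g\<in>linear_choices m k. tnorm k (tapply k (kron k (chosen_factors A X g)) v))"
    by (rule tnorm_sum[OF finite_linear_choices])
  also have "\<dots> \<le> (\<Sum>g\<in>linear_choices m k. mat_opnorm A ^ (k - m) * tnorm k v)"
    by (intro sum_mono kron_chosen_factors_bound X)
  finally show ?thesis by simp
qed

definition prod_tensor :: "nat \<Rightarrow> complex^'n \<Rightarrow> 'n::finite list \<Rightarrow> complex" where
  "prod_tensor k x is = (if length is = k then (\<Prod>l<k. x $ (is ! l)) else 0)"

lemma symtensor_prod_tensor: "symtensor k (prod_tensor k x)"
  unfolding symtensor_def
proof (intro conjI allI impI)
  fix "is" :: "'a list" and \<sigma> assume len: "length is = k" and \<sigma>: "\<sigma> permutes {..<k}"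
  have "(\<Prod>l<k. x $ (map (\<lambda>l. is ! \<sigma> l) [0..<k] ! l)) = (\<Prod>l<k. x $ (is ! \<sigma> l))"
    by (rule prod.cong) auto
  also have "\<dots> = (\<Prod>l<k. x $ (is ! l))"
    using prod.permute[OF \<sigma>, of "\<lambda>l. x $ (is ! l)"] by (simp add: comp_def)
  finally show "prod_tensor k x (map (\<lambda>l. is ! \<sigma> l) [0..<k]) = prod_tensor k x is"
    using len by (simp add: prod_tensor_def)
qed (simp add: prod_tensor_def)

lemma tnorm_prod_tensor: "tnorm k (prod_tensor k x) = norm x ^ k"
proof -
  have "tnorm_sq k (prod_tensor k x) = (\<Sum>is\<in>tidx k. \<Prod>l<k. (cmod (x $ (is ! l)))\<^sup>2)"
    by (auto simp: tnorm_sq_def prod_tensor_def tidx_def prod_norm[symmetric] prod_power_distrib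
        intro!: sum.cong)
  also have "\<dots> = (\<Prod>l<k. \<Sum>j\<in>UNIV. (cmod (x $ j))\<^sup>2)"
    by (rule sum_prod_tidx)
  also have "\<dots> = ((norm x)\<^sup>2) ^ k"
    by (simp add: norm_sq_vec)
  also have "\<dots> = (norm x ^ k)\<^sup>2"
    by (metis power_mult mult.commute)
  finally show ?thesis by (simp add: tnorm_sqrt)
qed

lemma tapply_kron_prod_tensor: "tapply k (kron k (\<lambda>_. Y)) (prod_tensor k x) = prod_tensor k (Y *v x)"
proof
  fix "is" :: "'a list"
  show "tapply k (kron k (\<lambda>_. Y)) (prod_tensor k x) is = prod_tensor k (Y *v x) is"
  proof (cases "length is = k")
    case True
    then have "tapply k (kron k (\<lambda>_. Y)) (prod_tensor k x) is =
        (\<Sum>js\<in>tidx k. \<Prod>l<k. Y $ (is ! l) $ (js ! l) * x $ (js ! l))"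
      by (auto simp: tapply_def kron_def prod_tensor_def tidx_def prod.distrib intro!: sum.cong)
    also have "\<dots> = (\<Prod>l<k. \<Sum>j\<in>UNIV. Y $ (is ! l) $ j * x $ j)"
      by (rule sum_prod_tidx)
    also have "\<dots> = prod_tensor k (Y *v x) is"
      using True by (simp add: prod_tensor_def matrix_vector_mult_def)
    finally show ?thesis .
  qed (simp add: tapply_def prod_tensor_def)
qed

lemma mat_opnorm_attained:
  fixes Y :: "complex^'n^'n"
  obtains x where "norm x = 1" "norm (Y *v x) = mat_opnorm Y"
proof -
  let ?S = "sphere (0::complex^'n) 1"
  obtain i :: 'n where True by blast
  then have "axis i 1 \<in> ?S" by (simp add: norm_axis_1)
  moreover have "continuous_on ?S (\<lambda>x. norm (Y *v x))"
    by (intro continuous_intros linear_continuous_on matrix_vector_mul_bounded_linear)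
  ultimately obtain x0 where x0: "x0 \<in> ?S" and max: "\<And>x. x \<in> ?S \<Longrightarrow> norm (Y *v x) \<le> norm (Y *v x0)"
    using continuous_attains_sup[OF compact_sphere] by blast
  have "mat_opnorm Y \<le> norm (Y *v x0)"
    unfolding mat_opnorm_def
  proof (rule onorm_le)
    fix x :: "complex^'n"
    show "norm (Y *v x) \<le> norm (Y *v x0) * norm x"
    proof (cases "x = 0")
      case False
      have "Y *v x = norm x *\<^sub>R (Y *v (inverse (norm x) *\<^sub>R x))"
        using False by (simp add: vec_eq_iff matrix_vector_mult_def scaleR_sum_right)
      then have "norm (Y *v x) = norm x * norm (Y *v (inverse (norm x) *\<^sub>R x))"
        by (metis norm_ge_zero norm_scaleR abs_of_nonneg)
      also have "\<dots> \<le> norm x * norm (Y *v x0)"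
        by (rule mult_left_mono) (use max False in auto)
      finally show ?thesis by (simp add: mult.commute)
    qed simp
  qed
  moreover have "norm (Y *v x0) \<le> mat_opnorm Y"
    using mat_opnorm_bound[of Y x0] x0 by simp
  ultimately show ?thesis
    using that[of x0] x0 by simp
qed

lemma unit_direction:
  obtains Y :: "complex^'n^'n" where "mat_opnorm Y = 1" "A = mat_opnorm A *\<^sub>R Y"
proof (cases "mat_opnorm A = 0")
  case True
  then have "A = 0"
    using onorm_eq_0[OF matrix_vector_mul_bounded_linear, of A]
    by (simp add: mat_opnorm_def matrix_eq)
  then show ?thesis
    using that[of "mat 1"] True by (simp add: mat_opnorm_def onorm_id)
next
  case False
  then have pos: "mat_opnorm A > 0" using mat_opnorm_nonneg[of A] by simp
  have "(\<lambda>x. (c *\<^sub>R A) *v x) = (\<lambda>x. c *\<^sub>R (A *v x))" for c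
    by (simp add: fun_eq_iff vec_eq_iff matrix_vector_mult_def scaleR_sum_right)
  then have "mat_opnorm (inverse (mat_opnorm A) *\<^sub>R A) = \<bar>inverse (mat_opnorm A)\<bar> * mat_opnorm A"
    unfolding mat_opnorm_def by (simp only: onorm_scaleR[OF matrix_vector_mul_bounded_linear])
  then show ?thesis using that[of "inverse (mat_opnorm A) *\<^sub>R A"] pos by simp
qed

text \<open>A linear choice g is determined by the positions at which
  the variables 1..m are chosen, an injection {1..m} -> {..<k}; conversely an injection f
  determines the choice labelling position f i by i and all other positions by 0.\<close>

definition injections :: "nat \<Rightarrow> nat \<Rightarrow> (nat \<Rightarrow> nat) set" where
  "injections m k = {f \<in> {1..m} \<rightarrow>\<^sub>E {..<k}. inj_on f {1..m}}"

definition positions :: "nat \<Rightarrow> nat \<Rightarrow> (nat \<Rightarrow> nat) \<Rightarrow> nat \<Rightarrow> nat" where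
  "positions m k g = restrict (\<lambda>i. THE l. l < k \<and> g l = i) {1..m}"

definition labels :: "nat \<Rightarrow> nat \<Rightarrow> (nat \<Rightarrow> nat) \<Rightarrow> nat \<Rightarrow> nat" where
  "labels m k f = restrict (\<lambda>l. if l \<in> f ` {1..m} then the_inv_into {1..m} f l else 0) {..<k}"

lemma positions_spec:
  assumes g: "g \<in> linear_choices m k" and i: "i \<in> {1..m}"
  shows "l < k \<and> g l = i \<longleftrightarrow> l = positions m k g i"
proof -
  have "card {l\<in>{..<k}. g l = i} = 1" using assms unfolding linear_choices_def by auto
  then obtain l0 where "{l\<in>{..<k}. g l = i} = {l0}" by (rule card_1_singletonE)
  then have "l < k \<and> g l = i \<longleftrightarrow> l = l0" for l by (auto simp: set_eq_iff)
  then show ?thesis using i by (simp add: positions_def)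
qed

lemma labels_spec:
  assumes f: "f \<in> injections m k" and i: "i \<in> {1..m}"
  shows "l < k \<and> labels m k f l = i \<longleftrightarrow> l = f i"
proof -
  have inj: "inj_on f {1..m}" and fi: "f i < k" using f i by (auto simp: injections_def PiE_iff)
  have "labels m k f l = i \<longleftrightarrow> l = f i" if "l < k"
  proof (cases "l \<in> f ` {1..m}")
    case True
    then obtain j where "j \<in> {1..m}" "l = f j" by auto
    then show ?thesis using that inj i by (auto simp: labels_def the_inv_into_f_f inj_on_eq_iff)
  qed (use that i in \<open>auto simp: labels_def\<close>)
  then show ?thesis using fi by auto
qed

lemma positions_in_injections:
  assumes "g \<in> linear_choices m k"
  shows "positions m k g \<in> injections m k"
proof -
  have "positions m k g i < k \<and> g (positions m k g i) = i" if "i \<in> {1..m}" for i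
    using positions_spec[OF assms that] by blast
  then show ?thesis
    unfolding injections_def by (auto simp: positions_def inj_on_def) metis
qed

lemma labels_in_linear_choices:
  assumes f: "f \<in> injections m k"
  shows "labels m k f \<in> linear_choices m k"
proof -
  have "the_inv_into {1..m} f l \<in> {1..m}" if "l \<in> f ` {1..m}" for l
    using that f by (auto simp: injections_def the_inv_into_f_f)
  then have "labels m k f \<in> choices m k"
    by (fastforce simp: choices_def labels_def)
  moreover have "{l\<in>{..<k}. labels m k f l = i} = {f i}" if "i \<in> {1..m}" for i
    using labels_spec[OF f that] by auto
  ultimately show ?thesis by (simp add: linear_choices_def)
qed

lemma labels_positions:
  assumes g: "g \<in> linear_choices m k"
  shows "labels m k (positions m k g) = g"
proof
  fix l
  let ?f = "positions m k g"
  have range: "g \<in> {..<k} \<rightarrow>\<^sub>E {0..m}" using g by (simp add: linear_choices_def choices_def)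
  have inj: "inj_on ?f {1..m}"
    using positions_in_injections[OF g] by (simp add: injections_def)
  have "l < k \<Longrightarrow> g l \<le> m" using range by (auto simp: PiE_iff)
  then consider "l \<ge> k" | "l < k" "g l = 0" | "l < k" "g l \<in> {1..m}"
    by (cases "l < k"; cases "g l = 0") auto
  then show "labels m k ?f l = g l"
  proof cases
    case 1
    then show ?thesis using PiE_arb[OF range, of l] by (simp add: labels_def)
  next
    case 2
    have "l \<notin> ?f ` {1..m}"
    proof
      assume "l \<in> ?f ` {1..m}"
      then obtain i where i: "i \<in> {1..m}" "l = ?f i" by blast
      then have "g l = i" using positions_spec[OF g i(1), of l] by blast
      then show False using 2 i by simp
    qed
    then show ?thesis using 2 by (simp add: labels_def)
  next
    case 3
    have pos: "l = ?f (g l)" using positions_spec[OF g 3(2), of l] 3(1) by blast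
    then have "l \<in> ?f ` {1..m}"
      using imageI[OF 3(2), of ?f] by simp
    moreover have "the_inv_into {1..m} ?f l = g l"
      using the_inv_into_f_f[OF inj 3(2)] pos by simp
    ultimately show ?thesis using 3 by (simp add: labels_def)
  qed
qed

lemma positions_labels:
  assumes f: "f \<in> injections m k"
  shows "positions m k (labels m k f) = f"
proof
  fix i
  show "positions m k (labels m k f) i = f i"
  proof (cases "i \<in> {1..m}")
    case True
    have "(THE l. l < k \<and> labels m k f l = i) = f i"
      using labels_spec[OF f True] by simp
    then show ?thesis using True by (simp add: positions_def)
  next
    case False
    have "f \<in> {1..m} \<rightarrow>\<^sub>E {..<k}" using f by (simp add: injections_def)
    then have "f i = undefined" using False by (rule PiE_arb)
    with False show ?thesis by (auto simp: positions_def)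
  qed
qed

lemma fact_as_falling_product: "m \<le> k \<Longrightarrow> fact (k - m) * (\<Prod>j\<in>{0..<m}. k - j) = (fact k :: nat)"
proof (induction m)
  case (Suc m)
  have "fact (Suc (k - Suc m)) = Suc (k - Suc m) * (fact (k - Suc m) :: nat)"
    by simp
  then have "fact (k - m) = (k - m) * (fact (k - Suc m) :: nat)"
    using Suc.prems by (simp add: Suc_diff_Suc)
  with Suc show ?case by (simp add: prod.atLeast0_lessThan_Suc mult_ac)
qed simp

lemma card_linear_choices:
  assumes "m \<le> k"
  shows "real (card (linear_choices m k)) = fact k / fact (k - m)"
proof -
  have "bij_betw (positions m k) (linear_choices m k) (injections m k)"
    by (rule bij_betw_byWitness[where f'="labels m k"])
       (auto simp: labels_positions positions_labels positions_in_injections labels_in_linear_choices)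
  then have "card (linear_choices m k) = card (injections m k)"
    by (rule bij_betw_same_card)
  also have "\<dots> = (\<Prod>j\<in>{0..<m}. k - j)"
    unfolding injections_def by (subst card_inj_on_subset_funcset) auto
  finally have "fact (k - m) * card (linear_choices m k) = (fact k :: nat)"
    using fact_as_falling_product[OF assms] by simp
  then have "(fact (k - m) :: real) * real (card (linear_choices m k)) = fact k"
    by (metis of_nat_fact of_nat_mult)
  then show ?thesis by (simp add: field_simps)
qed

text \<open>There is a symmetric tensor of norm one, so the supremum defining sym_opnorm
  ranges over a nonempty set.\<close>

lemma unit_symtensor_exists: "\<exists>v. symtensor k v \<and> tnorm k (v :: 'n::finite list \<Rightarrow> complex) = 1"
proof -
  obtain i :: 'n where True by blast
  then show ?thesis
    using symtensor_prod_tensor[of k "axis i 1"] tnorm_prod_tensor[of k "axis i (1::complex)"]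
    by (auto simp: norm_axis_1)
qed

lemma sym_opnorm_le:
  assumes "\<And>v. tnorm k (tapply k T v) \<le> B * tnorm k v"
  shows "sym_opnorm k (T :: 'n::finite list \<Rightarrow> 'n list \<Rightarrow> complex) \<le> B"
  unfolding sym_opnorm_def
proof (rule cSup_least)
  show "{tnorm k (tapply k T v) |v. symtensor k v \<and> tnorm k v = 1} \<noteq> {}"
    using unit_symtensor_exists[of k, where 'n='n] by blast
  fix y assume "y \<in> {tnorm k (tapply k T v) |v. symtensor k v \<and> tnorm k v = 1}"
  then obtain v where "y = tnorm k (tapply k T v)" "tnorm k v = 1" by blast
  then show "y \<le> B" using assms[of v] by simp
qed

lemma sym_opnorm_ge:
  assumes "symtensor k v" "tnorm k v = 1"
    and bounded: "\<And>w. tnorm k (tapply k T w) \<le> c * tnorm k w"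
  shows "tnorm k (tapply k T v) \<le> sym_opnorm k T"
  unfolding sym_opnorm_def
proof (rule cSup_upper)
  show "tnorm k (tapply k T v) \<in> {tnorm k (tapply k T v) |v. symtensor k v \<and> tnorm k v = 1}"
    using assms by blast
  show "bdd_above {tnorm k (tapply k T v) |v. symtensor k v \<and> tnorm k v = 1}"
  proof (rule bdd_aboveI[where M=c])
    fix y assume "y \<in> {tnorm k (tapply k T v) |v. symtensor k v \<and> tnorm k v = 1}"
    then obtain w where "y = tnorm k (tapply k T w)" "tnorm k w = 1" by blast
    then show "y \<le> c" using bounded[of w] by simp
  qed
qed

lemma kron_chosen_factors_aligned:
  assumes g: "g \<in> linear_choices m k" and A: "A = a *\<^sub>R Y"
  shows "kron k (chosen_factors A (\<lambda>_. Y) g) is js = complex_of_real a ^ (k - m) * kron k (\<lambda>_. Y) is js"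
proof -
  have scale: "a *\<^sub>R z = complex_of_real a * z" for z
    by (rule scaleR_conv_of_real)
  have "kron k (chosen_factors A (\<lambda>_. Y) g) is js =
      (\<Prod>l<k. (if g l = 0 then complex_of_real a else 1) * Y $ (is ! l) $ (js ! l))"
    unfolding kron_def by (rule prod.cong) (simp_all add: chosen_factors_def A scale)
  then show ?thesis
    by (simp add: prod.distrib prod_positions_of_A[OF g] kron_def)
qed

lemma DTpow_bound_attained:
  obtains X where "\<forall>i\<in>{1..m}. mat_opnorm (X i) = 1"
    "real (card (linear_choices m k)) * mat_opnorm A ^ (k - m) \<le> sym_opnorm k (DTpow m k A X)"
proof -
  let ?B = "real (card (linear_choices m k)) * mat_opnorm A ^ (k - m)"
  obtain Y where Y: "mat_opnorm Y = 1" and A: "A = mat_opnorm A *\<^sub>R Y"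
    by (rule unit_direction)
  obtain x where x: "norm x = 1" and "norm (Y *v x) = mat_opnorm Y"
    by (rule mat_opnorm_attained)
  then have Yx: "norm (Y *v x) = 1" using Y by simp
  have X: "\<forall>i\<in>{1..m}. mat_opnorm ((\<lambda>_. Y) i) = 1" using Y by simp
  have "DTpow m k A (\<lambda>_. Y) = (\<lambda>is js. complex_of_real ?B * kron k (\<lambda>_. Y) is js)"
    by (simp add: fun_eq_iff DTpow_linear_choices kron_chosen_factors_aligned[OF _ A]
        sum_distrib_right[symmetric] mult.assoc)
  then have norm_on_x: "tnorm k (tapply k (DTpow m k A (\<lambda>_. Y)) (prod_tensor k x)) = ?B"
    by (simp add: tapply_scale tapply_kron_prod_tensor tnorm_scale tnorm_prod_tensor Yx
        norm_mult norm_power mat_opnorm_nonneg)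
  have "tnorm k (tapply k (DTpow m k A (\<lambda>_. Y)) (prod_tensor k x)) \<le> sym_opnorm k (DTpow m k A (\<lambda>_. Y))"
    by (rule sym_opnorm_ge[OF symtensor_prod_tensor _ DTpow_bound[OF X]])
       (simp add: tnorm_prod_tensor x)
  then show ?thesis using that[OF X] norm_on_x by simp
qed

theorem theorem3p3:
  fixes A :: "complex^'n::finite^'n" and m k :: nat
  assumes "1 \<le> m" and "m \<le> k" and "k \<le> CARD('n)"
  shows "norm_D_sympow m k A = fact k / fact (k - m) * (mat_opnorm A) ^ (k - m)"
proof -
  let ?B = "real (card (linear_choices m k)) * mat_opnorm A ^ (k - m)"
  have upper: "sym_opnorm k (DTpow m k A X) \<le> ?B" if "\<forall>i\<in>{1..m}. mat_opnorm (X i) = 1" for X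
    by (rule sym_opnorm_le) (rule DTpow_bound[OF that])
  obtain X where X: "\<forall>i\<in>{1..m}. mat_opnorm (X i) = 1" and "?B \<le> sym_opnorm k (DTpow m k A X)"
    by (rule DTpow_bound_attained)
  then have attained: "sym_opnorm k (DTpow m k A X) = ?B"
    using upper[OF X] by simp
  have "norm_D_sympow m k A = ?B"
    unfolding norm_D_sympow_def
  proof (rule cSup_eq_maximum)
    show "?B \<in> {sym_opnorm k (DTpow m k A X) |X. \<forall>i\<in>{1..m}. mat_opnorm (X i) = 1}"
      using X attained by force
  qed (use upper in blast)
  then show ?thesis
    using card_linear_choices[OF assms(2)] by simp
qed

end
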